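(* Let $p,q\geq1$ be integers, $\alpha_0=\arctan\sqrt{q/p}$ and $P_0=(\alpha_0,\alpha_0)$. Let $(\vartheta(s),\alpha(s))$ be a trajectory of the differential system $$\dot\vartheta=3\sin\vartheta\cos\vartheta\sin(\alpha-\vartheta),\qquad \dot\alpha=q\cos\alpha\cos\vartheta-p\sin\alpha\sin\vartheta,$$ and suppose that for some $s_0$ one has $0<\vartheta(s_0)<\pi/2$ and $\vartheta(s_0)-\pi/2\leq\alpha(s_0)\leq\vartheta(s_0)+\pi/2$. Then $\lim_{s\to+\infty}(\vartheta(s),\alpha(s))=P_0$. *)

theory Defs
  imports "HOL-Analysis.Analysis"
begin

end

theory Submission
  imports Defs
begin

text \<open>
  Put u = \<alpha> - \<theta>. The function W = sin^q \<theta> cos^p \<theta> cos^3 u is a Lyapunov function: along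
  trajectories W' = 3 (p + q + 3) sin^(q+1) \<theta> cos^(p+1) \<theta> sin^2 u cos^2 u, which is nonnegative
  while 0 \<le> \<theta> \<le> \<pi>/2. Since the field points strictly inwards on the edges u = \<plusminus>\<pi>/2, a moment
  later the trajectory lies in the open region, where W > 0. From then on W stays above that value,
  which traps \<theta> in (0, \<pi>/2) and u in (-\<pi>/2, \<pi>/2) and keeps sin \<theta>, cos \<theta>, cos u away from 0.
  Being monotone and bounded, W converges, so Barbalat's lemma (W' is uniformly continuous) gives
  W' \<rightarrow> 0 and hence u \<rightarrow> 0. Barbalat again gives u' \<rightarrow> 0, so \<alpha>' = u' + \<theta>' \<rightarrow> 0; as
  \<alpha>' = q cos^2 \<theta> - p sin^2 \<theta> + O(u), this forces sin^2 \<theta> \<rightarrow> q / (p + q), i.e. \<theta> and \<alpha> tend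
  to arctan \<surd>(q/p).
\<close>

section \<open>Bounded Lipschitz functions\<close>

lemma lipschitz_on_sin: "1-lipschitz_on UNIV (sin :: real \<Rightarrow> real)"
proof (rule lipschitz_onI)
  fix x y :: real
  have "\<bar>sin x - sin y\<bar> = 2 * \<bar>sin ((x - y) / 2)\<bar> * \<bar>cos ((x + y) / 2)\<bar>"
    by (simp add: sin_diff_sin abs_mult)
  also have "\<dots> \<le> 2 * \<bar>(x - y) / 2\<bar> * 1"
    by (intro mult_mono abs_sin_x_le_abs_x) auto
  finally show "dist (sin x) (sin y) \<le> 1 * dist x y" by (simp add: dist_real_def)
qed simp

lemma lipschitz_on_cos: "1-lipschitz_on UNIV (cos :: real \<Rightarrow> real)"
proof (rule lipschitz_onI)
  fix x y :: real
  have "\<bar>cos x - cos y\<bar> = 2 * \<bar>sin ((x + y) / 2)\<bar> * \<bar>sin ((y - x) / 2)\<bar>"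
    by (simp add: cos_diff_cos abs_mult)
  also have "\<dots> \<le> 2 * 1 * \<bar>(y - x) / 2\<bar>"
    by (intro mult_mono abs_sin_x_le_abs_x) auto
  finally show "dist (cos x) (cos y) \<le> 1 * dist x y" by (simp add: dist_real_def)
qed simp

lemma lipschitz_on_UNIV_if_derivative_bounded:
  fixes f :: "real \<Rightarrow> real"
  assumes "\<And>x. (f has_real_derivative f' x) (at x)" and "\<And>x. \<bar>f' x\<bar> \<le> M"
  shows "M-lipschitz_on UNIV f"
proof (rule bounded_derivative_imp_lipschitz)
  show "(f has_derivative (\<lambda>h. f' x * h)) (at x within UNIV)" for x
    using assms(1) by (simp add: has_field_derivative_imp_has_derivative)
  show "onorm (\<lambda>h. f' x * h) \<le> M" for x
  proof -
    have "(\<lambda>h. f' x * h) = (\<lambda>h. h * f' x)" by (simp add: mult.commute)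
    then show ?thesis using onorm_scaleR_left[of "\<lambda>h::real. h" "f' x"] assms(2)[of x] by (simp add: onorm_id)
  qed
  show "0 \<le> M" using assms(2)[of 0] by simp
qed simp

definition bounded_lipschitz :: "('a::metric_space \<Rightarrow> real) \<Rightarrow> bool" where
  "bounded_lipschitz f \<longleftrightarrow> (\<exists>L. L-lipschitz_on UNIV f) \<and> (\<exists>B. \<forall>x. \<bar>f x\<bar> \<le> B)"

lemma bounded_lipschitz_const: "bounded_lipschitz (\<lambda>x. c)"
  unfolding bounded_lipschitz_def by (blast intro: lipschitz_on_constant)

lemma bounded_lipschitz_add:
  assumes "bounded_lipschitz f" "bounded_lipschitz g"
  shows "bounded_lipschitz (\<lambda>x. f x + g x)"
proof -
  obtain L M B C where "L-lipschitz_on UNIV f" "M-lipschitz_on UNIV g" "\<And>x. \<bar>f x\<bar> \<le> B" "\<And>x. \<bar>g x\<bar> \<le> C"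
    using assms unfolding bounded_lipschitz_def by blast
  then have "(L + M)-lipschitz_on UNIV (\<lambda>x. f x + g x)" "\<bar>f x + g x\<bar> \<le> B + C" for x
    by (auto intro: lipschitz_on_add abs_triangle_ineq[THEN order_trans] add_mono)
  then show ?thesis unfolding bounded_lipschitz_def by blast
qed

lemma bounded_lipschitz_minus:
  assumes "bounded_lipschitz f"
  shows "bounded_lipschitz (\<lambda>x. - f x)"
  using assms unfolding bounded_lipschitz_def by auto

lemma bounded_lipschitz_diff:
  assumes "bounded_lipschitz f" "bounded_lipschitz g"
  shows "bounded_lipschitz (\<lambda>x. f x - g x)"
  using bounded_lipschitz_add[OF assms(1) bounded_lipschitz_minus[OF assms(2)]] by simp

lemma bounded_lipschitz_mult:
  assumes "bounded_lipschitz f" "bounded_lipschitz g"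
  shows "bounded_lipschitz (\<lambda>x. f x * g x)"
proof -
  obtain L M B C where f: "L-lipschitz_on UNIV f" "\<And>x. \<bar>f x\<bar> \<le> B"
    and g: "M-lipschitz_on UNIV g" "\<And>x. \<bar>g x\<bar> \<le> C"
    using assms unfolding bounded_lipschitz_def by blast
  have "0 \<le> B" "0 \<le> C" using f(2) g(2) by (meson abs_ge_zero order_trans)+
  have "(B * M + C * L)-lipschitz_on UNIV (\<lambda>x. f x * g x)"
  proof (rule lipschitz_onI)
    fix x y
    have "f x * g x - f y * g y = f x * (g x - g y) + g y * (f x - f y)"
      by (simp add: algebra_simps)
    then have "\<bar>f x * g x - f y * g y\<bar> \<le> \<bar>f x\<bar> * \<bar>g x - g y\<bar> + \<bar>g y\<bar> * \<bar>f x - f y\<bar>"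
      by (metis abs_mult abs_triangle_ineq)
    also have "\<dots> \<le> B * (M * dist x y) + C * (L * dist x y)"
      using lipschitz_onD[OF f(1)] lipschitz_onD[OF g(1)] \<open>0 \<le> B\<close> \<open>0 \<le> C\<close>
      by (intro add_mono mult_mono f(2) g(2)) (auto simp: dist_real_def)
    finally show "dist (f x * g x) (f y * g y) \<le> (B * M + C * L) * dist x y"
      by (simp add: dist_real_def algebra_simps)
  qed (use \<open>0 \<le> B\<close> \<open>0 \<le> C\<close> lipschitz_on_nonneg[OF f(1)] lipschitz_on_nonneg[OF g(1)] in simp)
  moreover have "\<bar>f x * g x\<bar> \<le> B * C" for x
    unfolding abs_mult using \<open>0 \<le> B\<close> by (intro mult_mono f(2) g(2)) auto
  ultimately show ?thesis unfolding bounded_lipschitz_def by blast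
qed

lemma bounded_lipschitz_power:
  "bounded_lipschitz f \<Longrightarrow> bounded_lipschitz (\<lambda>x. f x ^ n)"
  by (induction n) (simp_all add: bounded_lipschitz_const bounded_lipschitz_mult)

lemma bounded_lipschitz_compose:
  assumes "K-lipschitz_on UNIV g" and "\<And>y. \<bar>g y\<bar> \<le> B" and "L-lipschitz_on UNIV f"
  shows "bounded_lipschitz (\<lambda>x. g (f x))"
proof -
  have "(K * L)-lipschitz_on UNIV (\<lambda>x. g (f x))"
    using lipschitz_on_compose[OF assms(3) lipschitz_on_subset[OF assms(1)]] by (simp add: o_def)
  then show ?thesis unfolding bounded_lipschitz_def using assms(2) by blast
qed

lemma bounded_lipschitz_sin: "L-lipschitz_on UNIV f \<Longrightarrow> bounded_lipschitz (\<lambda>x. sin (f x))"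
  by (rule bounded_lipschitz_compose[OF lipschitz_on_sin abs_sin_le_one])

lemma bounded_lipschitz_cos: "L-lipschitz_on UNIV f \<Longrightarrow> bounded_lipschitz (\<lambda>x. cos (f x))"
  by (rule bounded_lipschitz_compose[OF lipschitz_on_cos abs_cos_le_one])

lemma bounded_lipschitz_imp_uniformly_continuous:
  "bounded_lipschitz f \<Longrightarrow> uniformly_continuous_on UNIV f"
  unfolding bounded_lipschitz_def using lipschitz_on_uniformly_continuous by blast

section \<open>Limits at infinity\<close>

lemma barbalat:
  fixes g g' :: "real \<Rightarrow> real"
  assumes lim: "(g \<longlongrightarrow> L) at_top"
    and deriv: "\<And>t. (g has_real_derivative g' t) (at t)"
    and unif: "uniformly_continuous_on UNIV g'"
  shows "(g' \<longlongrightarrow> 0) at_top"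
proof (rule tendstoI)
  fix e :: real assume "e > 0"
  then obtain d where d: "d > 0" "\<And>x y. \<bar>x - y\<bar> < d \<Longrightarrow> \<bar>g' x - g' y\<bar> < e / 2"
    using unif unfolding uniformly_continuous_on_def dist_real_def by (meson UNIV_I half_gt_zero)
  define h where "h = d / 2"
  have h: "h > 0" "\<And>x y. \<bar>x - y\<bar> \<le> h \<Longrightarrow> \<bar>g' x - g' y\<bar> < e / 2"
    using d unfolding h_def by auto
  have "\<forall>\<^sub>F t in at_top. dist (g t) L < e * h / 4"
    using tendstoD[OF lim, of "e * h / 4"] \<open>e > 0\<close> h(1) by simp
  then obtain T where T: "\<And>t. t \<ge> T \<Longrightarrow> \<bar>g t - L\<bar> < e * h / 4"
    by (auto simp: eventually_at_top_linorder dist_real_def)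
  have "\<bar>g' t\<bar> < e" if "t \<ge> T" for t
  proof (rule ccontr)
    assume "\<not> \<bar>g' t\<bar> < e"
    obtain z where z: "t < z" "z < t + h" "g (t + h) - g t = h * g' z"
      using MVT2[of t "t + h" g g'] h(1) deriv by auto
    have "\<bar>g' z - g' t\<bar> < e / 2" using h(2)[of z t] z by simp
    then have "e / 2 \<le> \<bar>g' z\<bar>" using \<open>\<not> \<bar>g' t\<bar> < e\<close> by linarith
    then have "h * (e / 2) \<le> \<bar>g (t + h) - g t\<bar>"
      using h(1) unfolding z(3) abs_mult by (simp add: mult_left_mono)
    moreover have "\<bar>g (t + h) - g t\<bar> < e * h / 2" using T[of t] T[of "t + h"] \<open>t \<ge> T\<close> h(1) by linarith
    ultimately show False by (simp add: algebra_simps)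
  qed
  then show "\<forall>\<^sub>F t in at_top. dist (g' t) 0 < e"
    unfolding eventually_at_top_linorder dist_real_def by auto
qed

lemma mono_on_bdd_above_tendsto_Sup:
  fixes f :: "real \<Rightarrow> real"
  assumes mono: "mono_on {a..} f" and bdd: "bdd_above (f ` {a..})"
  shows "(f \<longlongrightarrow> Sup (f ` {a..})) at_top"
proof (rule increasing_tendsto)
  have "f x \<le> Sup (f ` {a..})" if "x \<ge> a" for x
    using bdd that by (intro cSup_upper) auto
  then show "\<forall>\<^sub>F x in at_top. f x \<le> Sup (f ` {a..})"
    unfolding eventually_at_top_linorder by blast
next
  fix y assume "y < Sup (f ` {a..})"
  then obtain x where x: "x \<ge> a" "y < f x" using less_cSup_iff[OF _ bdd] by auto
  have "y < f t" if "t \<ge> x" for t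
    using x that mono_onD[OF mono, of x t] by simp
  then show "\<forall>\<^sub>F t in at_top. y < f t"
    unfolding eventually_at_top_linorder by blast
qed

lemma continuous_stays_in_interval:
  fixes f :: "real \<Rightarrow> real"
  assumes cont: "continuous_on {a..} f" and start: "l < f a" "f a < r"
    and step: "\<And>t. a \<le> t \<Longrightarrow> (\<forall>x\<in>{a..t}. l \<le> f x \<and> f x \<le> r) \<Longrightarrow> l < f t \<and> f t < r"
    and "a \<le> t"
  shows "l < f t \<and> f t < r"
proof (rule ccontr)
  assume "\<not> (l < f t \<and> f t < r)"
  define S where "S = {a..t} \<inter> f -` ({..l} \<union> {r..})"
  have "closed S" unfolding S_def
    using cont by (intro continuous_closed_preimage) (auto intro: continuous_on_subset)
  moreover have "t \<in> S" using \<open>\<not> (l < f t \<and> f t < r)\<close> \<open>a \<le> t\<close> unfolding S_def by auto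
  moreover have "bdd_below S" unfolding S_def by (rule bdd_belowI[of _ a]) auto
  ultimately have "Inf S \<in> S" using closed_contains_Inf by blast
  define m where "m = Inf S"
  have "m \<in> S" using \<open>Inf S \<in> S\<close> by (simp add: m_def)
  have inside: "l < f x \<and> f x < r" if "a \<le> x" "x < m" for x
    using cInf_lower[OF _ \<open>bdd_below S\<close>, of x] that \<open>m \<in> S\<close> unfolding S_def m_def by force
  have "a < m" using \<open>m \<in> S\<close> start unfolding S_def by (cases "a = m") auto
  have "{a..<m} \<subseteq> {a..m} \<inter> f -` {l..r}" using inside by (force simp: less_imp_le)
  moreover have "closed ({a..m} \<inter> f -` {l..r})"
    using cont by (intro continuous_closed_preimage) (auto intro: continuous_on_subset)
  ultimately have "closure {a..<m} \<subseteq> {a..m} \<inter> f -` {l..r}" by (rule closure_minimal)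
  then have "\<forall>x\<in>{a..m}. l \<le> f x \<and> f x \<le> r" using \<open>a < m\<close> by auto
  then have "l < f m \<and> f m < r" using step \<open>a < m\<close> by auto
  then show False using \<open>m \<in> S\<close> unfolding S_def by auto
qed

lemma eventually_at_right_less_if_deriv_neg:
  fixes f :: "real \<Rightarrow> real"
  assumes "(f has_real_derivative l) (at x)" and "l < 0"
  shows "\<forall>\<^sub>F y in at_right x. f y < f x"
proof -
  obtain d where d: "d > 0" "\<And>h. 0 < h \<Longrightarrow> h < d \<Longrightarrow> f (x + h) < f x"
    using DERIV_neg_dec_right[OF assms] by blast
  show ?thesis unfolding eventually_at_right_field
  proof (intro exI[of _ "x + d"] conjI allI impI)
    fix y assume "x < y" "y < x + d"
    then show "f y < f x" using d(2)[of "y - x"] by simp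
  qed (use d(1) in simp)
qed

lemma tendsto_of_tendsto_sin:
  fixes f :: "'a \<Rightarrow> real"
  assumes "((\<lambda>x. sin (f x)) \<longlongrightarrow> l) F" and "-1 < l" "l < 1"
    and "\<forall>\<^sub>F x in F. \<bar>f x\<bar> \<le> pi / 2"
  shows "(f \<longlongrightarrow> arcsin l) F"
proof -
  have "((\<lambda>x. arcsin (sin (f x))) \<longlongrightarrow> arcsin l) F"
    using isCont_tendsto_compose[OF isCont_arcsin assms(1)] assms(2,3) by simp
  moreover have "\<forall>\<^sub>F x in F. arcsin (sin (f x)) = f x"
    using assms(4) by (rule eventually_mono) (auto intro!: arcsin_sin simp: abs_le_iff)
  ultimately show ?thesis by (simp add: tendsto_cong)
qed

lemma tendsto_of_tendsto_power2:
  fixes f :: "'a \<Rightarrow> real"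
  assumes "((\<lambda>x. f x ^ 2) \<longlongrightarrow> l ^ 2) F" and "0 \<le> l" and "\<forall>\<^sub>F x in F. 0 \<le> f x"
  shows "(f \<longlongrightarrow> l) F"
proof -
  have "((\<lambda>x. sqrt (f x ^ 2)) \<longlongrightarrow> sqrt (l ^ 2)) F" by (rule tendsto_real_sqrt[OF assms(1)])
  moreover have "\<forall>\<^sub>F x in F. sqrt (f x ^ 2) = f x" using assms(3) by (rule eventually_mono) simp
  ultimately show ?thesis using assms(2) by (simp add: tendsto_cong)
qed

lemma arcsin_sqrt_eq_arctan_sqrt:
  fixes a b :: real
  assumes "0 < a" "0 \<le> b"
  shows "arcsin (sqrt (b / (a + b))) = arctan (sqrt (b / a))"
proof -
  define x where "x = sqrt (b / (a + b))"
  have "b / (a + b) < 1" using assms by (simp add: field_simps)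
  then have "x < 1" unfolding x_def by simp
  have "0 \<le> x" unfolding x_def using assms by simp
  then have "-1 < x" by linarith
  have "1 - x ^ 2 = a / (a + b)" unfolding x_def using assms by (simp add: field_simps)
  then have "x / sqrt (1 - x ^ 2) = sqrt (b / a)"
    unfolding x_def using assms by (simp add: real_sqrt_divide field_simps)
  then show ?thesis using arcsin_arctan[OF \<open>-1 < x\<close> \<open>x < 1\<close>] by (simp add: x_def)
qed

lemma power_mult_le_base:
  fixes x y :: real
  assumes "0 \<le> x" "x \<le> 1" "0 \<le> y" "y \<le> 1" "n \<ge> 1"
  shows "x ^ n * y \<le> x"
proof -
  have "x ^ n * y \<le> x ^ 1 * 1"
    using assms by (intro mult_mono power_decreasing) auto
  then show ?thesis by simp
qed

section \<open>Trajectories of the system\<close>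

locale trajectory =
  fixes p q :: nat and \<theta> \<alpha> :: "real \<Rightarrow> real"
  assumes p_pos: "p \<ge> 1" and q_pos: "q \<ge> 1"
    and \<theta>_deriv: "\<And>s. (\<theta> has_real_derivative
           3 * sin (\<theta> s) * cos (\<theta> s) * sin (\<alpha> s - \<theta> s)) (at s)"
    and \<alpha>_deriv: "\<And>s. (\<alpha> has_real_derivative
           real q * cos (\<alpha> s) * cos (\<theta> s) - real p * sin (\<alpha> s) * sin (\<theta> s)) (at s)"
begin

definition u :: "real \<Rightarrow> real" where "u s = \<alpha> s - \<theta> s"

definition \<theta>' :: "real \<Rightarrow> real" where "\<theta>' s = 3 * sin (\<theta> s) * cos (\<theta> s) * sin (u s)"

definition \<alpha>' :: "real \<Rightarrow> real" where
  "\<alpha>' s = real q * cos (\<alpha> s) * cos (\<theta> s) - real p * sin (\<alpha> s) * sin (\<theta> s)"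

definition W :: "real \<Rightarrow> real" where
  "W s = sin (\<theta> s) ^ q * cos (\<theta> s) ^ p * cos (u s) ^ 3"

definition W' :: "real \<Rightarrow> real" where
  "W' s = 3 * (real p + real q + 3) * sin (\<theta> s) ^ (q + 1) * cos (\<theta> s) ^ (p + 1)
      * sin (u s) ^ 2 * cos (u s) ^ 2"

lemma has_derivative_\<theta>: "(\<theta> has_real_derivative \<theta>' s) (at s)"
  using \<theta>_deriv by (simp add: \<theta>'_def u_def)

lemma has_derivative_\<alpha>: "(\<alpha> has_real_derivative \<alpha>' s) (at s)"
  using \<alpha>_deriv by (simp add: \<alpha>'_def)

lemma has_derivative_u: "(u has_real_derivative \<alpha>' s - \<theta>' s) (at s)"
  unfolding u_def[abs_def] by (intro derivative_intros has_derivative_\<theta> has_derivative_\<alpha>)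

lemma \<alpha>'_altdef: "\<alpha>' s = real q * cos (u s + \<theta> s) * cos (\<theta> s) - real p * sin (u s + \<theta> s) * sin (\<theta> s)"
  by (simp add: \<alpha>'_def u_def)

lemma has_derivative_W: "(W has_real_derivative W' s) (at s)"
proof -
  \<comment> \<open>The chain rule produces the exponents \<open>q - 1\<close> and \<open>p - 1\<close>; writing \<open>q\<close>, \<open>p\<close> as successors
      removes the truncated subtraction.\<close>
  obtain a b where ab: "q = Suc a" "p = Suc b" using p_pos q_pos by (metis Suc_le_D One_nat_def)
  show ?thesis unfolding W_def[abs_def]
    apply (rule derivative_eq_intros refl has_derivative_\<theta> has_derivative_u | assumption)+
    unfolding W'_def \<theta>'_def \<alpha>'_altdef cos_add sin_add
    unfolding ab
    apply (simp only: power_Suc diff_Suc_1)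
    apply (simp add: algebra_simps power2_eq_square power3_eq_cube)
    done
qed

lemma W'_nonneg: "0 \<le> \<theta> s \<Longrightarrow> \<theta> s \<le> pi / 2 \<Longrightarrow> 0 \<le> W' s"
  unfolding W'_def by (intro mult_nonneg_nonneg zero_le_power zero_le_power2 sin_ge_zero cos_ge_zero) auto

lemma W_increasing:
  assumes "x \<le> y" and "\<And>z. x \<le> z \<Longrightarrow> z \<le> y \<Longrightarrow> 0 \<le> \<theta> z \<and> \<theta> z \<le> pi / 2"
  shows "W x \<le> W y"
proof (rule DERIV_nonneg_imp_nondecreasing[OF assms(1)])
  fix z assume "x \<le> z" "z \<le> y"
  then show "\<exists>d. (W has_real_derivative d) (at z) \<and> 0 \<le> d"
    using has_derivative_W W'_nonneg assms(2) by blast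
qed

lemma W_eq_0:
  assumes "sin (\<theta> s) = 0 \<or> cos (\<theta> s) = 0 \<or> cos (u s) = 0"
  shows "W s = 0"
  using assms p_pos q_pos unfolding W_def by auto

lemma abs_W_le_1: "\<bar>W s\<bar> \<le> 1"
  unfolding W_def abs_mult power_abs by (intro mult_le_one power_le_one) auto

lemma W_le_factors:
  assumes "0 \<le> \<theta> s" "\<theta> s \<le> pi / 2" "0 \<le> cos (u s)"
  shows "W s \<le> sin (\<theta> s)" "W s \<le> cos (\<theta> s)" "W s \<le> cos (u s)"
proof -
  have unit: "0 \<le> sin (\<theta> s)" "sin (\<theta> s) \<le> 1" "0 \<le> cos (\<theta> s)" "cos (\<theta> s) \<le> 1"
    "0 \<le> cos (u s)" "cos (u s) \<le> 1"
    using assms by (auto intro!: sin_ge_zero cos_ge_zero)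
  have power_unit: "0 \<le> x ^ k * y ^ l" "x ^ k * y ^ l \<le> 1" if "0 \<le> x" "x \<le> 1" "0 \<le> y" "y \<le> 1"
    for x y :: real and k l
    using that by (simp_all add: mult_le_one power_le_one)
  have W_as: "W s = sin (\<theta> s) ^ q * (cos (\<theta> s) ^ p * cos (u s) ^ 3)"
       "W s = cos (\<theta> s) ^ p * (sin (\<theta> s) ^ q * cos (u s) ^ 3)"
       "W s = cos (u s) ^ 3 * (sin (\<theta> s) ^ q * cos (\<theta> s) ^ p)"
    unfolding W_def by (simp_all add: ac_simps)
  show "W s \<le> sin (\<theta> s)" unfolding W_as(1)
    by (rule power_mult_le_base) (use unit power_unit q_pos in auto)
  show "W s \<le> cos (\<theta> s)" unfolding W_as(2)
    by (rule power_mult_le_base) (use unit power_unit p_pos in auto)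
  show "W s \<le> cos (u s)" unfolding W_as(3)
    by (rule power_mult_le_base) (use unit power_unit in auto)
qed

lemma abs_\<theta>'_le: "\<bar>\<theta>' s\<bar> \<le> 3 * \<bar>sin (u s)\<bar>"
proof -
  have "\<bar>sin (\<theta> s) * cos (\<theta> s)\<bar> \<le> 1" unfolding abs_mult by (intro mult_le_one) auto
  then show ?thesis unfolding \<theta>'_def abs_mult
    by (simp add: mult_right_mono)
qed

lemma abs_\<alpha>'_le: "\<bar>\<alpha>' s\<bar> \<le> real p + real q"
proof -
  have "\<bar>cos (\<alpha> s)\<bar> * \<bar>cos (\<theta> s)\<bar> \<le> 1" "\<bar>sin (\<alpha> s)\<bar> * \<bar>sin (\<theta> s)\<bar> \<le> 1"
    by (intro mult_le_one; simp)+
  then have "\<bar>real q * cos (\<alpha> s) * cos (\<theta> s)\<bar> \<le> real q" "\<bar>real p * sin (\<alpha> s) * sin (\<theta> s)\<bar> \<le> real p"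
    using mult_left_le[of _ "real q"] mult_left_le[of _ "real p"] by (simp_all add: abs_mult mult.assoc)
  then show ?thesis unfolding \<alpha>'_def by linarith
qed

lemma lipschitz_\<theta>: "3-lipschitz_on UNIV \<theta>"
proof (rule lipschitz_on_UNIV_if_derivative_bounded[OF has_derivative_\<theta>])
  show "\<bar>\<theta>' s\<bar> \<le> 3" for s using abs_\<theta>'_le[of s] abs_sin_le_one[of "u s"] by linarith
qed

lemma lipschitz_\<alpha>: "(real p + real q)-lipschitz_on UNIV \<alpha>"
  by (rule lipschitz_on_UNIV_if_derivative_bounded[OF has_derivative_\<alpha> abs_\<alpha>'_le])

lemma lipschitz_u: "(real p + real q + 3)-lipschitz_on UNIV u"
  using lipschitz_on_diff[OF lipschitz_\<alpha> lipschitz_\<theta>] unfolding u_def[abs_def] by simp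

lemma uniformly_continuous_W': "uniformly_continuous_on UNIV W'"
  unfolding W'_def[abs_def]
  by (intro bounded_lipschitz_imp_uniformly_continuous bounded_lipschitz_mult bounded_lipschitz_power
      bounded_lipschitz_const bounded_lipschitz_sin bounded_lipschitz_cos)
    (rule lipschitz_\<theta> lipschitz_u)+

lemma uniformly_continuous_u': "uniformly_continuous_on UNIV (\<lambda>s. \<alpha>' s - \<theta>' s)"
  unfolding \<alpha>'_def[abs_def] \<theta>'_def[abs_def]
  by (intro bounded_lipschitz_imp_uniformly_continuous bounded_lipschitz_diff bounded_lipschitz_mult
      bounded_lipschitz_const bounded_lipschitz_sin bounded_lipschitz_cos)
    (rule lipschitz_\<theta> lipschitz_\<alpha> lipschitz_u)+

lemma \<alpha>'_near_quadratic:
  "\<bar>\<alpha>' s - (real q * cos (\<theta> s) ^ 2 - real p * sin (\<theta> s) ^ 2)\<bar> \<le> (real p + real q) * \<bar>u s\<bar>"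
proof -
  have "\<bar>cos (\<alpha> s) - cos (\<theta> s)\<bar> \<le> \<bar>u s\<bar>" "\<bar>sin (\<alpha> s) - sin (\<theta> s)\<bar> \<le> \<bar>u s\<bar>"
    using lipschitz_onD[OF lipschitz_on_cos] lipschitz_onD[OF lipschitz_on_sin]
    by (simp_all add: dist_real_def u_def)
  then have factors: "\<bar>cos (\<theta> s)\<bar> * \<bar>cos (\<alpha> s) - cos (\<theta> s)\<bar> \<le> 1 * \<bar>u s\<bar>"
      "\<bar>sin (\<theta> s)\<bar> * \<bar>sin (\<alpha> s) - sin (\<theta> s)\<bar> \<le> 1 * \<bar>u s\<bar>"
    by (intro mult_mono; simp)+
  have "\<bar>real q * cos (\<theta> s) * (cos (\<alpha> s) - cos (\<theta> s))\<bar> \<le> real q * \<bar>u s\<bar>"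
      "\<bar>real p * sin (\<theta> s) * (sin (\<alpha> s) - sin (\<theta> s))\<bar> \<le> real p * \<bar>u s\<bar>"
    using mult_left_mono[OF factors(1), of "real q"] mult_left_mono[OF factors(2), of "real p"]
    by (simp_all add: abs_mult mult.assoc)
  moreover have "\<alpha>' s - (real q * cos (\<theta> s) ^ 2 - real p * sin (\<theta> s) ^ 2)
      = real q * cos (\<theta> s) * (cos (\<alpha> s) - cos (\<theta> s)) - real p * sin (\<theta> s) * (sin (\<alpha> s) - sin (\<theta> s))"
    unfolding \<alpha>'_def by (simp add: algebra_simps power2_eq_square)
  ultimately show ?thesis by (simp add: algebra_simps)
qed

lemma continuous_\<theta>: "continuous_on A \<theta>"
  using has_derivative_\<theta> by (meson DERIV_isCont continuous_at_imp_continuous_on)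

lemma continuous_u: "continuous_on A u"
  using has_derivative_u by (meson DERIV_isCont continuous_at_imp_continuous_on)

lemma u_deriv_at_upper_boundary:
  assumes "u s = pi / 2"
  shows "\<alpha>' s - \<theta>' s = - ((real p + real q + 3) * (sin (\<theta> s) * cos (\<theta> s)))"
  unfolding \<alpha>'_altdef \<theta>'_def assms by (simp add: cos_add sin_add algebra_simps)

lemma u_deriv_at_lower_boundary:
  assumes "u s = - (pi / 2)"
  shows "\<alpha>' s - \<theta>' s = (real p + real q + 3) * (sin (\<theta> s) * cos (\<theta> s))"
  unfolding \<alpha>'_altdef \<theta>'_def assms by (simp add: cos_add sin_add cos_diff sin_diff algebra_simps)

lemma eventually_at_right_in_open_region:
  assumes "0 < \<theta> s\<^sub>0" "\<theta> s\<^sub>0 < pi / 2" "\<bar>u s\<^sub>0\<bar> \<le> pi / 2"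
  shows "\<forall>\<^sub>F s in at_right s\<^sub>0. 0 < \<theta> s \<and> \<theta> s < pi / 2 \<and> \<bar>u s\<bar> < pi / 2"
proof -
  have "0 < sin (\<theta> s\<^sub>0) * cos (\<theta> s\<^sub>0)"
    using assms(1,2) by (intro mult_pos_pos sin_gt_zero cos_gt_zero_pi) auto
  then have u'_sign: "u s\<^sub>0 = pi / 2 \<Longrightarrow> \<alpha>' s\<^sub>0 - \<theta>' s\<^sub>0 < 0" "u s\<^sub>0 = - (pi / 2) \<Longrightarrow> - (\<alpha>' s\<^sub>0 - \<theta>' s\<^sub>0) < 0"
    using u_deriv_at_upper_boundary u_deriv_at_lower_boundary by simp_all
  have lim_\<theta>: "(\<theta> \<longlongrightarrow> \<theta> s\<^sub>0) (at_right s\<^sub>0)" and lim_u: "(u \<longlongrightarrow> u s\<^sub>0) (at_right s\<^sub>0)"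
    using DERIV_isCont[OF has_derivative_\<theta>] DERIV_isCont[OF has_derivative_u]
    by (simp_all add: isCont_def filterlim_at_split)
  have "\<forall>\<^sub>F s in at_right s\<^sub>0. 0 < \<theta> s" "\<forall>\<^sub>F s in at_right s\<^sub>0. \<theta> s < pi / 2"
    using order_tendstoD[OF lim_\<theta>] assms(1,2) by blast+
  moreover have "\<forall>\<^sub>F s in at_right s\<^sub>0. u s < pi / 2"
  proof (cases "u s\<^sub>0 = pi / 2")
    case True
    from eventually_at_right_less_if_deriv_neg[OF has_derivative_u u'_sign(1)[OF True]]
    show ?thesis by (rule eventually_mono) (use True in linarith)
  next
    case False
    then have "u s\<^sub>0 < pi / 2" using assms(3) by linarith
    then show ?thesis by (rule order_tendstoD(2)[OF lim_u])
  qed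
  moreover have "\<forall>\<^sub>F s in at_right s\<^sub>0. - (pi / 2) < u s"
  proof (cases "u s\<^sub>0 = - (pi / 2)")
    case True
    have "((\<lambda>s. - u s) has_real_derivative - (\<alpha>' s\<^sub>0 - \<theta>' s\<^sub>0)) (at s\<^sub>0)"
      by (intro derivative_intros has_derivative_u)
    from eventually_at_right_less_if_deriv_neg[OF this u'_sign(2)[OF True]]
    show ?thesis by (rule eventually_mono) (use True in linarith)
  next
    case False
    then have "- (pi / 2) < u s\<^sub>0" using assms(3) by linarith
    then show ?thesis by (rule order_tendstoD(1)[OF lim_u])
  qed
  ultimately show ?thesis by eventually_elim auto
qed

context
  fixes s\<^sub>1 :: real
  assumes start: "0 < \<theta> s\<^sub>1" "\<theta> s\<^sub>1 < pi / 2" "\<bar>u s\<^sub>1\<bar> < pi / 2"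
begin

lemma W_start_pos: "0 < W s\<^sub>1"
  unfolding W_def using start by (intro mult_pos_pos zero_less_power sin_gt_zero cos_gt_zero_pi) auto

lemma \<theta>_stays_in_open_quadrant:
  assumes "s\<^sub>1 \<le> t"
  shows "0 < \<theta> t \<and> \<theta> t < pi / 2"
proof (rule continuous_stays_in_interval[OF continuous_\<theta> start(1,2) _ assms])
  fix t assume t: "s\<^sub>1 \<le> t" "\<forall>x\<in>{s\<^sub>1..t}. 0 \<le> \<theta> x \<and> \<theta> x \<le> pi / 2"
  then have "W s\<^sub>1 \<le> W t" by (intro W_increasing) auto
  then have "sin (\<theta> t) \<noteq> 0" "cos (\<theta> t) \<noteq> 0" using W_eq_0 W_start_pos by auto
  then have "\<theta> t \<noteq> 0" "\<theta> t \<noteq> pi / 2" by (metis sin_zero, metis cos_pi_half)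
  moreover have "0 \<le> \<theta> t" "\<theta> t \<le> pi / 2" using t by auto
  ultimately show "0 < \<theta> t \<and> \<theta> t < pi / 2" by linarith
qed

lemma W_mono: "mono_on {s\<^sub>1..} W"
  using \<theta>_stays_in_open_quadrant by (intro mono_onI W_increasing) (auto simp: less_imp_le)

lemma u_stays_in_open_interval:
  assumes "s\<^sub>1 \<le> t"
  shows "\<bar>u t\<bar> < pi / 2"
proof -
  have "- (pi / 2) < u t \<and> u t < pi / 2"
  proof (rule continuous_stays_in_interval[OF continuous_u _ _ _ assms])
    fix t assume t: "s\<^sub>1 \<le> t" "\<forall>x\<in>{s\<^sub>1..t}. - (pi / 2) \<le> u x \<and> u x \<le> pi / 2"
    then have "W s\<^sub>1 \<le> W t" using W_mono by (auto dest: mono_onD)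
    then have "cos (u t) \<noteq> 0" using W_eq_0 W_start_pos by auto
    then have "u t \<noteq> - (pi / 2)" "u t \<noteq> pi / 2" by (metis cos_minus cos_pi_half, metis cos_pi_half)
    moreover have "- (pi / 2) \<le> u t" "u t \<le> pi / 2" using t by auto
    ultimately show "- (pi / 2) < u t \<and> u t < pi / 2" by linarith
  qed (use start(3) in auto)
  then show ?thesis by linarith
qed

lemma W_start_le_factors:
  assumes "s\<^sub>1 \<le> t"
  shows "W s\<^sub>1 \<le> sin (\<theta> t)" "W s\<^sub>1 \<le> cos (\<theta> t)" "W s\<^sub>1 \<le> cos (u t)"
proof -
  have "0 < \<theta> t" "\<theta> t < pi / 2" "\<bar>u t\<bar> < pi / 2"
    using \<theta>_stays_in_open_quadrant[OF assms] u_stays_in_open_interval[OF assms] by auto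
  moreover have "W s\<^sub>1 \<le> W t" using assms by (intro mono_onD[OF W_mono]) auto
  moreover have "0 \<le> cos (u t)" using \<open>\<bar>u t\<bar> < pi / 2\<close> by (intro cos_ge_zero) auto
  ultimately show "W s\<^sub>1 \<le> sin (\<theta> t)" "W s\<^sub>1 \<le> cos (\<theta> t)" "W s\<^sub>1 \<le> cos (u t)"
    using W_le_factors[of t] by auto
qed

lemma W'_tendsto_0: "(W' \<longlongrightarrow> 0) at_top"
proof (rule barbalat[OF _ has_derivative_W uniformly_continuous_W'])
  have "bdd_above (W ` {s\<^sub>1..})" using abs_W_le_1 by (intro bdd_aboveI[of _ 1]) (auto simp: abs_le_iff)
  then show "(W \<longlongrightarrow> Sup (W ` {s\<^sub>1..})) at_top"
    by (rule mono_on_bdd_above_tendsto_Sup[OF W_mono])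
qed

lemma W'_ge_sin_u_sq:
  obtains K where "0 < K" and "\<And>t. s\<^sub>1 \<le> t \<Longrightarrow> K * sin (u t) ^ 2 \<le> W' t"
proof
  define w where "w = W s\<^sub>1"
  define C where "C = 3 * (real p + real q + 3)"
  have "0 < w" using W_start_pos by (simp add: w_def)
  then show "0 < C * w ^ (q + 1) * w ^ (p + 1) * w ^ 2" by (simp add: C_def)
  fix t assume "s\<^sub>1 \<le> t"
  note bounds = W_start_le_factors[OF this, folded w_def]
  have "C * w ^ (q + 1) * w ^ (p + 1) * w ^ 2 \<le> C * sin (\<theta> t) ^ (q + 1) * cos (\<theta> t) ^ (p + 1) * cos (u t) ^ 2"
    unfolding C_def using \<open>0 < w\<close> bounds by (intro mult_mono power_mono mult_nonneg_nonneg zero_le_power; simp)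
  then have "C * w ^ (q + 1) * w ^ (p + 1) * w ^ 2 * sin (u t) ^ 2
      \<le> C * sin (\<theta> t) ^ (q + 1) * cos (\<theta> t) ^ (p + 1) * cos (u t) ^ 2 * sin (u t) ^ 2"
    by (rule mult_right_mono) simp
  then show "C * w ^ (q + 1) * w ^ (p + 1) * w ^ 2 * sin (u t) ^ 2 \<le> W' t"
    by (simp add: W'_def C_def ac_simps)
qed

lemma sin_u_tendsto_0: "((\<lambda>s. sin (u s)) \<longlongrightarrow> 0) at_top"
proof -
  obtain K where "0 < K" and K: "\<And>t. s\<^sub>1 \<le> t \<Longrightarrow> K * sin (u t) ^ 2 \<le> W' t"
    using W'_ge_sin_u_sq by blast
  have "\<bar>sin (u t)\<bar> ^ 2 \<le> W' t / K" if "s\<^sub>1 \<le> t" for t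
    using K[OF that] \<open>0 < K\<close> by (simp add: pos_le_divide_eq mult.commute)
  then have upper: "\<forall>\<^sub>F t in at_top. \<bar>sin (u t)\<bar> ^ 2 \<le> W' t / K"
    unfolding eventually_at_top_linorder by blast
  have lower: "\<forall>\<^sub>F t in at_top. 0 \<le> \<bar>sin (u t)\<bar> ^ 2"
    by (intro always_eventually allI zero_le_power2)
  have "((\<lambda>t. W' t / K) \<longlongrightarrow> 0) at_top"
    using tendsto_divide_zero[OF W'_tendsto_0] by simp
  then have "((\<lambda>t. \<bar>sin (u t)\<bar> ^ 2) \<longlongrightarrow> 0 ^ 2) at_top"
    unfolding zero_power2 by (rule tendsto_sandwich[OF lower upper tendsto_const])
  then have "((\<lambda>t. \<bar>sin (u t)\<bar>) \<longlongrightarrow> 0) at_top"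
    by (rule tendsto_of_tendsto_power2) auto
  then show ?thesis by (simp add: tendsto_rabs_zero_iff)
qed

lemma u_tendsto_0: "(u \<longlongrightarrow> 0) at_top"
proof -
  have "\<forall>\<^sub>F t in at_top. \<bar>u t\<bar> \<le> pi / 2"
    unfolding eventually_at_top_linorder using u_stays_in_open_interval by (auto intro!: less_imp_le)
  then show ?thesis using tendsto_of_tendsto_sin[OF sin_u_tendsto_0] by simp
qed

lemma \<alpha>'_tendsto_0: "(\<alpha>' \<longlongrightarrow> 0) at_top"
proof -
  have "((\<lambda>s. \<alpha>' s - \<theta>' s) \<longlongrightarrow> 0) at_top"
    by (rule barbalat[OF u_tendsto_0 has_derivative_u uniformly_continuous_u'])
  moreover have "(\<theta>' \<longlongrightarrow> 0) at_top"
    using abs_\<theta>'_le by (intro tendsto_0_le[OF sin_u_tendsto_0, of _ 3] always_eventually) (simp add: mult.commute)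
  ultimately show ?thesis using tendsto_add by fastforce
qed

lemma sin_\<theta>_sq_tendsto: "((\<lambda>s. sin (\<theta> s) ^ 2) \<longlongrightarrow> real q / (real p + real q)) at_top"
proof -
  define D where "D s = real q * cos (\<theta> s) ^ 2 - real p * sin (\<theta> s) ^ 2" for s
  have "((\<lambda>s. \<alpha>' s - D s) \<longlongrightarrow> 0) at_top"
    using \<alpha>'_near_quadratic unfolding D_def
    by (intro tendsto_0_le[OF u_tendsto_0, of _ "real p + real q"] always_eventually) (simp add: mult.commute)
  then have "(D \<longlongrightarrow> 0) at_top"
    using tendsto_diff[OF \<alpha>'_tendsto_0] by fastforce
  then have "((\<lambda>s. (real q - D s) / (real p + real q)) \<longlongrightarrow> (real q - 0) / (real p + real q)) at_top"
    using p_pos by (intro tendsto_intros) auto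
  moreover have "(real q - D s) / (real p + real q) = sin (\<theta> s) ^ 2" for s
    using p_pos by (simp add: D_def cos_squared_eq field_simps)
  ultimately show ?thesis by simp
qed

lemma \<theta>_tendsto: "(\<theta> \<longlongrightarrow> arctan (sqrt (real q / real p))) at_top"
proof -
  define x where "x = sqrt (real q / (real p + real q))"
  have "x ^ 2 = real q / (real p + real q)" "0 \<le> x" "x < 1" using p_pos by (simp_all add: x_def)
  have quadrant: "\<forall>\<^sub>F t in at_top. 0 < \<theta> t \<and> \<theta> t < pi / 2"
    unfolding eventually_at_top_linorder using \<theta>_stays_in_open_quadrant by blast
  have "\<forall>\<^sub>F t in at_top. 0 \<le> sin (\<theta> t)"
    using quadrant by (rule eventually_mono) (simp add: sin_ge_zero)
  then have "((\<lambda>t. sin (\<theta> t)) \<longlongrightarrow> x) at_top"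
    using tendsto_of_tendsto_power2[of "\<lambda>t. sin (\<theta> t)" x] sin_\<theta>_sq_tendsto \<open>x ^ 2 = _\<close> \<open>0 \<le> x\<close>
    by simp
  moreover have "\<forall>\<^sub>F t in at_top. \<bar>\<theta> t\<bar> \<le> pi / 2"
    using quadrant by (rule eventually_mono) simp
  ultimately have "(\<theta> \<longlongrightarrow> arcsin x) at_top"
    using \<open>0 \<le> x\<close> \<open>x < 1\<close> by (intro tendsto_of_tendsto_sin[of \<theta>]) simp_all
  then show ?thesis using arcsin_sqrt_eq_arctan_sqrt[of "real p" "real q"] p_pos by (simp add: x_def)
qed

end

end

theorem lemma4p10:
  fixes p q :: nat and \<theta> \<alpha> :: "real \<Rightarrow> real" and s\<^sub>0 :: real
  assumes "p \<ge> 1" and "q \<ge> 1"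
    and "\<And>s. (\<theta> has_real_derivative
           3 * sin (\<theta> s) * cos (\<theta> s) * sin (\<alpha> s - \<theta> s)) (at s)"
    and "\<And>s. (\<alpha> has_real_derivative
           real q * cos (\<alpha> s) * cos (\<theta> s) - real p * sin (\<alpha> s) * sin (\<theta> s)) (at s)"
    and "0 < \<theta> s\<^sub>0" and "\<theta> s\<^sub>0 < pi / 2"
    and "\<theta> s\<^sub>0 - pi / 2 \<le> \<alpha> s\<^sub>0" and "\<alpha> s\<^sub>0 \<le> \<theta> s\<^sub>0 + pi / 2"
  shows "((\<lambda>s. (\<theta> s, \<alpha> s)) \<longlongrightarrow>
           (arctan (sqrt (real q / real p)), arctan (sqrt (real q / real p)))) at_top"
proof -
  interpret trajectory p q \<theta> \<alpha> using assms(1-4) by unfold_locales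
  have "\<bar>u s\<^sub>0\<bar> \<le> pi / 2" using assms(7,8) unfolding u_def abs_le_iff by linarith
  then obtain s\<^sub>1 where start: "0 < \<theta> s\<^sub>1" "\<theta> s\<^sub>1 < pi / 2" "\<bar>u s\<^sub>1\<bar> < pi / 2"
    using eventually_happens'[OF trivial_limit_at_right_real eventually_at_right_in_open_region[OF assms(5,6)]] by blast
  have "(\<theta> \<longlongrightarrow> arctan (sqrt (real q / real p))) at_top" by (rule \<theta>_tendsto[OF start])
  moreover have "(\<alpha> \<longlongrightarrow> arctan (sqrt (real q / real p))) at_top"
    using tendsto_add[OF calculation u_tendsto_0[OF start]] by (simp add: u_def)
  ultimately show ?thesis by (rule tendsto_Pair)
qed

end
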